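(* Let $k>4$ and $v\ge2$ be integers. If an OA$(3,k+1,v)$ exists, then a simple COA$_\lambda(2,2k+1,v)$ exists for every positive integer $\lambda\le v$.
   Context: An OA$_\lambda(t,k,v)$ is a $\lambda v^t\times k$ array over a $v$-set $V$ such that every $t$ columns contain every $t$-tuple exactly $\lambda$ times; OA$(t,k,v)$ means $\lambda=1$. A COA$_\lambda(t,k,v)$ is a $\lambda v^t\times k$ array over $V$ in which every set of $t$ consecutive columns contains every $t$-tuple exactly $\lambda$ times. It is simple if for any two distinct sets of $t$ consecutive columns sharing exactly $i$ columns ($0\le i\le t-1$), the subarray on the $2t-i$ columns of their union contains each $(2t-i)$-tuple at most once. *)

theory Defs
  imports Main
begin

text \<open>An array is a list of rows; each row is a list of entries (columns indexed from 0).\<close>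

definition proj :: "'a list \<Rightarrow> nat list \<Rightarrow> 'a list" where
  "proj r cols = map (\<lambda>c. r ! c) cols"

definition occ :: "'a list list \<Rightarrow> nat list \<Rightarrow> 'a list \<Rightarrow> nat" where
  "occ A cols x = length (filter (\<lambda>r. proj r cols = x) A)"

definition is_array :: "nat \<Rightarrow> nat \<Rightarrow> 'a set \<Rightarrow> 'a list list \<Rightarrow> bool" where
  "is_array N k V A \<longleftrightarrow> length A = N \<and> (\<forall>r\<in>set A. length r = k \<and> set r \<subseteq> V)"

definition is_OA :: "nat \<Rightarrow> nat \<Rightarrow> nat \<Rightarrow> 'a set \<Rightarrow> 'a list list \<Rightarrow> bool" where
  "is_OA lam t k V A \<longleftrightarrow>
     is_array (lam * card V ^ t) k V A \<and>
     (\<forall>S. S \<subseteq> {..<k} \<and> card S = t \<longrightarrow>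
        (\<forall>x. length x = t \<and> set x \<subseteq> V \<longrightarrow> occ A (sorted_list_of_set S) x = lam))"

definition is_COA :: "nat \<Rightarrow> nat \<Rightarrow> nat \<Rightarrow> 'a set \<Rightarrow> 'a list list \<Rightarrow> bool" where
  "is_COA lam t k V A \<longleftrightarrow>
     is_array (lam * card V ^ t) k V A \<and>
     (\<forall>i. i + t \<le> k \<longrightarrow>
        (\<forall>x. length x = t \<and> set x \<subseteq> V \<longrightarrow> occ A [i..<i+t] x = lam))"

definition simple_COA :: "nat \<Rightarrow> nat \<Rightarrow> 'a list list \<Rightarrow> bool" where
  "simple_COA t k A \<longleftrightarrow>
     (\<forall>i j. i < j \<and> j + t \<le> k \<longrightarrow>
        distinct (map (\<lambda>r. proj r (sorted_list_of_set ({i..<i+t} \<union> {j..<j+t}))) A))"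

end

theory Submission
  imports Defs
begin

text \<open>Keep only the rows of an OA(3,k+1,v) whose last entry lies in a fixed \<lambda>-subset of the
  symbols and delete that column: every pair of columns now carries every pair exactly \<lambda> times,
  and any three columns still separate the rows. Read the columns of this OA_\<lambda>(2,k,v) along a
  trail of 2k edges in the complete graph on the k columns, which exists for k \<ge> 5: consecutive
  positions are distinct columns, giving a COA_\<lambda>(2,2k+1,v), and two distinct windows are two
  distinct edges, hence span at least three columns, which is simplicity.\<close>

lemma occ_eq_count_list: "occ A cols x = count_list (map (\<lambda>r. proj r cols) A) x"
  by (simp add: occ_def count_list_eq_length_filter filter_map comp_def eq_commute)

lemma distinct_iff_count_list_le_1: "distinct xs \<longleftrightarrow> (\<forall>x. count_list xs x \<le> 1)"
proof (induction xs)
  case (Cons a xs)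
  have "(\<forall>x. count_list (a # xs) x \<le> 1) \<longleftrightarrow> count_list xs a = 0 \<and> (\<forall>x. count_list xs x \<le> 1)"
  proof
    assume le: "\<forall>x. count_list (a # xs) x \<le> 1"
    have "count_list xs x \<le> 1" for x
      using le[rule_format, of x] by (simp split: if_splits)
    then show "count_list xs a = 0 \<and> (\<forall>x. count_list xs x \<le> 1)"
      using le[rule_format, of a] by simp
  qed simp
  then show ?case using Cons.IH by (simp add: count_list_0_iff)
qed simp

lemma length_proj [simp]: "length (proj r cols) = length cols"
  by (simp add: proj_def)

lemma length_eq_2_conv: "length x = 2 \<longleftrightarrow> (\<exists>x0 x1. x = [x0, x1])"
  by (auto simp: numeral_2_eq_2 length_Suc_conv)

lemma proj_eq_iff: "proj r cols = proj r' cols \<longleftrightarrow> (\<forall>c\<in>set cols. r ! c = r' ! c)"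
  by (simp add: proj_def map_eq_conv)

lemma proj_take: "set cols \<subseteq> {..<k} \<Longrightarrow> proj (take k r) cols = proj r cols"
  by (auto simp: proj_def)

lemma set_proj_subset: "set r \<subseteq> V \<Longrightarrow> set cols \<subseteq> {..<length r} \<Longrightarrow> set (proj r cols) \<subseteq> V"
  using nth_mem by (fastforce simp: proj_def)

lemma OA_row: "is_OA lam t k V A \<Longrightarrow> r \<in> set A \<Longrightarrow> length r = k \<and> set r \<subseteq> V"
  by (simp add: is_OA_def is_array_def)

lemma sorted_list_of_set_card_2:
  fixes S :: "'a::linorder set"
  assumes "card S = 2"
  obtains a b where "a < b" "S = {a, b}" "sorted_list_of_set S = [a, b]"
proof -
  obtain a b where ab: "S = {a, b}" "a \<noteq> b"
    using assms by (auto simp: card_2_iff)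
  let ?lo = "min a b" and ?hi = "max a b"
  have lohi: "?lo < ?hi" "S = {?lo, ?hi}"
    using ab by (auto simp: min_def max_def)
  moreover have "sorted_list_of_set {?lo, ?hi} = [?lo, ?hi]"
    using lohi(1) by (subst sorted_list_of_set_unique[symmetric]) auto
  ultimately show ?thesis
    using that by simp
qed

lemma length_eq_if_balanced:
  assumes "finite V" and "\<forall>r\<in>set A. set (proj r cols) \<subseteq> V"
    and "\<forall>x. length x = length cols \<and> set x \<subseteq> V \<longrightarrow> occ A cols x = lam"
  shows "length A = lam * card V ^ length cols"
proof -
  let ?X = "{x. set x \<subseteq> V \<and> length x = length cols}"
  have "length A = (\<Sum>x\<in>?X. count_list (map (\<lambda>r. proj r cols) A) x)"
    using assms(2) by (subst sum_count_set) (auto intro: finite_lists_length_eq[OF assms(1)])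
  also have "\<dots> = (\<Sum>x\<in>?X. lam)"
    using assms(3) by (intro sum.cong) (auto simp: occ_eq_count_list)
  finally show ?thesis
    by (simp add: card_lists_length_eq[OF assms(1)])
qed

lemma occ_OA_sorted_columns:
  assumes "is_OA lam t k V A" and "sorted_wrt (<) cols" "set cols \<subseteq> {..<k}" "length cols = t"
    and "length x = t" "set x \<subseteq> V"
  shows "occ A cols x = lam"
proof -
  have "card (set cols) = t"
    using assms(2,4) by (simp add: distinct_card strict_sorted_iff)
  moreover have "\<forall>S. S \<subseteq> {..<k} \<and> card S = t \<longrightarrow>
      (\<forall>x. length x = t \<and> set x \<subseteq> V \<longrightarrow> occ A (sorted_list_of_set S) x = lam)"
    using assms(1) by (simp add: is_OA_def)
  ultimately have "occ A (sorted_list_of_set (set cols)) x = lam"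
    using assms(3,5,6) by simp
  moreover have "sorted_list_of_set (set cols) = cols"
    using assms(2) by (simp add: sorted_list_of_set_unique[symmetric] distinct_card strict_sorted_iff)
  ultimately show ?thesis by simp
qed

lemma occ_OA2_distinct_columns:
  assumes OA: "is_OA lam 2 k V A" and "a \<noteq> b" "a < k" "b < k" "x \<in> V" "y \<in> V"
  shows "occ A [a, b] [x, y] = lam"
proof (cases "a < b")
  case True
  then show ?thesis
    using assms(3-6) by (intro occ_OA_sorted_columns[OF OA]) auto
next
  case False
  then have "occ A [b, a] [y, x] = lam"
    using assms(2-6) by (intro occ_OA_sorted_columns[OF OA]) auto
  then show ?thesis by (simp add: occ_def proj_def conj_commute)
qed

definition rows_distinct_on :: "nat \<Rightarrow> nat \<Rightarrow> 'a list list \<Rightarrow> bool" where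
  "rows_distinct_on t k A \<longleftrightarrow>
     (\<forall>S. S \<subseteq> {..<k} \<and> card S = t \<longrightarrow> distinct (map (\<lambda>r. proj r (sorted_list_of_set S)) A))"

lemma rows_distinct_on_OA_index_one:
  assumes OA: "is_OA 1 t k V A"
  shows "rows_distinct_on t k A"
  unfolding rows_distinct_on_def
proof (intro allI impI)
  fix S :: "nat set" assume S: "S \<subseteq> {..<k} \<and> card S = t"
  let ?cols = "sorted_list_of_set S"
  have "count_list (map (\<lambda>r. proj r ?cols) A) y \<le> 1" for y
  proof (cases "y \<in> set (map (\<lambda>r. proj r ?cols) A)")
    case True
    then obtain r where r: "r \<in> set A" "y = proj r ?cols" by auto
    have "finite S" using S finite_subset by blast
    then have "set ?cols \<subseteq> {..<length r}" using S OA_row[OF OA r(1)] by simp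
    then have "set y \<subseteq> V" using r OA_row[OF OA r(1)] set_proj_subset by blast
    moreover have "length y = t" using r(2) S \<open>finite S\<close> by simp
    ultimately show ?thesis
      using OA S unfolding is_OA_def by (simp add: occ_eq_count_list)
  qed simp
  then show "distinct (map (\<lambda>r. proj r ?cols) A)"
    by (simp add: distinct_iff_count_list_le_1)
qed

lemma rows_distinct_on_map_take_filter:
  assumes "rows_distinct_on t k' A" "k \<le> k'"
  shows "rows_distinct_on t k (map (take k) (filter P A))"
  unfolding rows_distinct_on_def
proof (intro allI impI)
  fix S :: "nat set" assume S: "S \<subseteq> {..<k} \<and> card S = t"
  then have "finite S" using finite_subset by blast
  have "S \<subseteq> {..<k'}" using S assms(2) by auto
  then have "distinct (map (\<lambda>r. proj r (sorted_list_of_set S)) (filter P A))"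
    using assms(1) S by (intro distinct_map_filter) (simp add: rows_distinct_on_def)
  then show "distinct (map (\<lambda>r. proj r (sorted_list_of_set S)) (map (take k) (filter P A)))"
    using S \<open>finite S\<close> by (simp add: proj_take comp_def)
qed

lemma occ_fix_last_column:
  assumes OA: "is_OA 1 3 (k + 1) V A" and "finite V" "L \<subseteq> V"
    and "a < b" "b < k" "x \<in> V" "y \<in> V"
  shows "occ (filter (\<lambda>r. r ! k \<in> L) A) [a, b] [x, y] = card L"
proof -
  let ?xs = "filter (\<lambda>r. proj r [a, b] = [x, y]) (filter (\<lambda>r. r ! k \<in> L) A)"
  have "finite L" using assms(2,3) finite_subset by blast
  have "occ (filter (\<lambda>r. r ! k \<in> L) A) [a, b] [x, y] = length (map (\<lambda>r. r ! k) ?xs)"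
    by (simp add: occ_def)
  also have "\<dots> = (\<Sum>l\<in>L. count_list (map (\<lambda>r. r ! k) ?xs) l)"
    using \<open>finite L\<close> by (subst sum_count_set) auto
  also have "\<dots> = (\<Sum>l\<in>L. occ A [a, b, k] [x, y, l])"
  proof (rule sum.cong[OF refl])
    fix l assume "l \<in> L"
    then have "filter (\<lambda>r. l = r ! k) ?xs = filter (\<lambda>r. proj r [a, b, k] = [x, y, l]) A"
      unfolding filter_filter by (intro filter_cong) (auto simp: proj_def)
    then show "count_list (map (\<lambda>r. r ! k) ?xs) l = occ A [a, b, k] [x, y, l]"
      by (simp add: occ_def count_list_eq_length_filter filter_map comp_def)
  qed
  also have "\<dots> = (\<Sum>l\<in>L. 1)"
  proof (rule sum.cong[OF refl])
    fix l assume "l \<in> L"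
    then have "l \<in> V" using assms(3) by blast
    moreover have "sorted_wrt (<) [a, b, k]" "set [a, b, k] \<subseteq> {..<k + 1}"
      using assms(4,5) by auto
    ultimately show "occ A [a, b, k] [x, y, l] = 1"
      using assms(6,7) by (intro occ_OA_sorted_columns[OF OA]) auto
  qed
  finally show ?thesis by simp
qed

lemma OA_fix_last_column:
  assumes OA: "is_OA 1 3 (k + 1) V A" and "finite V" "L \<subseteq> V" "2 \<le> k"
  shows "is_OA (card L) 2 k V (map (take k) (filter (\<lambda>r. r ! k \<in> L) A))"
proof -
  let ?B = "map (take k) (filter (\<lambda>r. r ! k \<in> L) A)"
  have occ_B: "occ ?B [a, b] [x, y] = card L"
    if ab: "a < b" "b < k" and xy: "x \<in> V" "y \<in> V" for a b x y
  proof -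
    have "occ ?B [a, b] [x, y] = occ (filter (\<lambda>r. r ! k \<in> L) A) [a, b] [x, y]"
      using ab by (simp add: occ_def filter_map comp_def proj_take)
    also have "\<dots> = card L"
      using occ_fix_last_column[OF assms(1-3) ab xy] .
    finally show ?thesis .
  qed
  have rows: "\<forall>r\<in>set ?B. length r = k \<and> set r \<subseteq> V"
  proof
    fix r assume "r \<in> set ?B"
    then obtain r0 where r0: "r0 \<in> set A" "r = take k r0" by auto
    have "length r0 = k + 1" "set r0 \<subseteq> V" using OA_row[OF OA r0(1)] by simp_all
    then show "length r = k \<and> set r \<subseteq> V" using r0(2) set_take_subset[of k r0] by auto
  qed
  have "length ?B = card L * card V ^ length [0, 1::nat]"
  proof (rule length_eq_if_balanced[OF assms(2)])
    show "\<forall>r\<in>set ?B. set (proj r [0, 1]) \<subseteq> V"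
    proof
      fix r assume "r \<in> set ?B"
      with rows have "length r = k" "set r \<subseteq> V" by auto
      then show "set (proj r [0, 1]) \<subseteq> V" using assms(4) by (intro set_proj_subset) auto
    qed
    show "\<forall>x. length x = length [0, 1::nat] \<and> set x \<subseteq> V \<longrightarrow> occ ?B [0, 1] x = card L"
    proof (intro allI impI)
      fix x :: "'a list" assume x: "length x = length [0, 1::nat] \<and> set x \<subseteq> V"
      then obtain x0 x1 where "x = [x0, x1]" by (auto simp: length_Suc_conv)
      then show "occ ?B [0, 1] x = card L" using x assms(4) occ_B[of 0 1] by simp
    qed
  qed
  moreover have "occ ?B (sorted_list_of_set S) x = card L"
    if S: "S \<subseteq> {..<k}" "card S = 2" and x: "length x = 2" "set x \<subseteq> V" for S x
  proof -
    obtain a b where ab: "a < b" "S = {a, b}" "sorted_list_of_set S = [a, b]"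
      using sorted_list_of_set_card_2 S(2) by blast
    obtain x0 x1 where "x = [x0, x1]"
      using x(1) by (auto simp: length_eq_2_conv)
    then show ?thesis using occ_B[of a b x0 x1] ab S(1) x(2) by auto
  qed
  ultimately show ?thesis
    using rows by (simp add: is_OA_def is_array_def power2_eq_square)
qed

text \<open>The trail 0, 1, \<dots>, k-1, 0, 3, 1, 4, 2, 5, \<dots>, read off at positions 0, \<dots>, 2k.
  Wrapping the odd offsets to 0 at value k closes it without repeating an edge.\<close>
definition column_trail :: "nat \<Rightarrow> nat \<Rightarrow> nat" where
  "column_trail k m =
     (if m < k then m
      else let d = m - k in
        if even d then d div 2 else if d div 2 + 3 = k then 0 else d div 2 + 3)"

lemma column_trail_below: "m < k \<Longrightarrow> column_trail k m = m"
  by (simp add: column_trail_def)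

lemma column_trail_even: "column_trail k (k + 2 * t) = t"
  by (simp add: column_trail_def)

lemma column_trail_odd: "column_trail k (Suc (k + 2 * t)) = (if t + 3 = k then 0 else t + 3)"
  by (simp add: column_trail_def)

lemma column_trail_cases:
  obtains (below) "m < k" | (even) t where "m = k + 2 * t" | (odd) t where "m = Suc (k + 2 * t)"
proof (cases "m < k")
  case False
  then obtain d where d: "m = k + d" using le_Suc_ex not_less by blast
  then show ?thesis
    using even odd by (cases "even d") (auto elim!: evenE oddE)
qed

lemma column_trail_less: "5 \<le> k \<Longrightarrow> m \<le> 2 * k \<Longrightarrow> column_trail k m < k"
  by (cases m k rule: column_trail_cases) (auto simp: column_trail_below column_trail_even column_trail_odd)

lemma column_trail_Suc_below: "m < k \<Longrightarrow> column_trail k (Suc m) = (if Suc m < k then Suc m else 0)"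
  by (simp add: column_trail_def)

lemma column_trail_Suc_odd: "column_trail k (Suc (Suc (k + 2 * t))) = Suc t"
  using column_trail_even[of k "Suc t"] by simp

lemma column_trail_Suc_neq:
  assumes "5 \<le> k" "m < 2 * k"
  shows "column_trail k m \<noteq> column_trail k (Suc m)"
  using assms
  by (cases m k rule: column_trail_cases)
    (auto simp: column_trail_below column_trail_Suc_below column_trail_even column_trail_odd
      column_trail_Suc_odd)

lemma column_trail_edges_distinct:
  assumes "5 \<le> k" "i < j" "j < 2 * k"
  shows "{column_trail k i, column_trail k (Suc i)} \<noteq> {column_trail k j, column_trail k (Suc j)}"
  using assms
  by (cases i k rule: column_trail_cases; cases j k rule: column_trail_cases)
    (auto simp: doubleton_eq_iff column_trail_below column_trail_Suc_below column_trail_even column_trail_odd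
      column_trail_Suc_odd split: if_splits)

lemma card_column_trail_window:
  assumes "5 \<le> k" "i < j" "j < 2 * k"
  shows "3 \<le> card (column_trail k ` {i, Suc i, j, Suc j})"
proof -
  have "column_trail k i \<noteq> column_trail k (Suc i)" "column_trail k j \<noteq> column_trail k (Suc j)"
    using assms column_trail_Suc_neq by simp_all
  then show ?thesis
    using column_trail_edges_distinct[OF assms] by (auto simp: card_insert_if doubleton_eq_iff)
qed

lemma proj_proj: "set cols \<subseteq> {..<length cs} \<Longrightarrow> proj (proj r cs) cols = proj r (map ((!) cs) cols)"
  by (auto simp: proj_def)

lemma occ_map_proj:
  "set cols \<subseteq> {..<length cs} \<Longrightarrow> occ (map (\<lambda>r. proj r cs) A) cols x = occ A (map ((!) cs) cols) x"
  by (simp add: occ_def filter_map comp_def proj_proj)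

lemma COA_of_OA2_trail:
  assumes OA: "is_OA lam 2 k V B"
    and trail_less: "\<forall>m<n. c m < k" and trail_step: "\<forall>m. Suc m < n \<longrightarrow> c m \<noteq> c (Suc m)"
  shows "is_COA lam 2 n V (map (\<lambda>r. proj r (map c [0..<n])) B)"
proof -
  let ?cs = "map c [0..<n]"
  have "\<forall>r'\<in>set (map (\<lambda>r. proj r ?cs) B). length r' = n \<and> set r' \<subseteq> V"
  proof
    fix r' assume "r' \<in> set (map (\<lambda>r. proj r ?cs) B)"
    then obtain r where r: "r \<in> set B" "r' = proj r ?cs" by auto
    have "length r = k" "set r \<subseteq> V" using OA_row[OF OA r(1)] by simp_all
    moreover have "set ?cs \<subseteq> {..<k}" using trail_less by auto
    ultimately show "length r' = n \<and> set r' \<subseteq> V"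
      using r(2) set_proj_subset[of r V ?cs] by simp
  qed
  then have "is_array (lam * card V ^ 2) n V (map (\<lambda>r. proj r ?cs) B)"
    using OA by (simp add: is_array_def is_OA_def)
  moreover have "occ (map (\<lambda>r. proj r ?cs) B) [i..<i + 2] x = lam"
    if i: "i + 2 \<le> n" and x: "length x = 2" "set x \<subseteq> V" for i x
  proof -
    obtain x0 x1 where x01: "x = [x0, x1]"
      using x(1) by (auto simp: length_eq_2_conv)
    have "[i..<i + 2] = [i, Suc i]" by (simp add: numeral_2_eq_2)
    then have "occ (map (\<lambda>r. proj r ?cs) B) [i..<i + 2] x = occ B [c i, c (Suc i)] x"
      using i by (simp add: occ_map_proj)
    also have "\<dots> = lam"
      using i x(2) x01 trail_less trail_step by (simp add: occ_OA2_distinct_columns[OF OA])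
    finally show ?thesis .
  qed
  ultimately show ?thesis by (simp add: is_COA_def)
qed

lemma simple_COA_of_trail:
  assumes dist: "rows_distinct_on 3 k B" and trail_less: "\<forall>m<n. c m < k"
    and trail_windows: "\<forall>i j. i < j \<and> Suc j < n \<longrightarrow> 3 \<le> card (c ` {i, Suc i, j, Suc j})"
  shows "simple_COA 2 n (map (\<lambda>r. proj r (map c [0..<n])) B)"
  unfolding simple_COA_def
proof (intro allI impI)
  fix i j assume ij: "i < j \<and> j + 2 \<le> n"
  let ?cs = "map c [0..<n]"
  let ?U = "{i..<i + 2} \<union> {j..<j + 2}"
  let ?cols = "sorted_list_of_set ?U"
  have "?U = {i, Suc i, j, Suc j}" by auto
  then have "3 \<le> card (c ` ?U)" using trail_windows ij by simp
  then obtain S where S: "S \<subseteq> c ` ?U" "card S = 3"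
    by (meson obtain_subset_with_card_n)
  have U_less: "?U \<subseteq> {..<n}" using ij by auto
  then have "S \<subseteq> {..<k}" using S(1) trail_less by auto
  then have "distinct (map (\<lambda>r. proj r (sorted_list_of_set S)) B)"
    using dist S(2) by (simp add: rows_distinct_on_def)
  moreover have "proj r (sorted_list_of_set S) = proj r' (sorted_list_of_set S)"
    if "proj (proj r ?cs) ?cols = proj (proj r' ?cs) ?cols" for r r'
  proof -
    have "(!) ?cs ` ?U = c ` ?U" using U_less by (intro image_cong) auto
    then have "set (map ((!) ?cs) ?cols) = c ` ?U" by simp
    moreover have "proj r (map ((!) ?cs) ?cols) = proj r' (map ((!) ?cs) ?cols)"
      using that U_less by (simp add: proj_proj)
    ultimately have "\<forall>s\<in>c ` ?U. r ! s = r' ! s"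
      unfolding proj_eq_iff by simp
    moreover have "finite S" using S(2) card.infinite by fastforce
    ultimately show ?thesis using S(1) by (auto simp: proj_eq_iff)
  qed
  ultimately show "distinct (map (\<lambda>r. proj r ?cols) (map (\<lambda>r. proj r ?cs) B))"
    by (auto simp: distinct_map inj_on_def)
qed

theorem mainTheorem7:
  fixes k v :: nat and V :: "'a set"
  assumes "k > 4" and "v \<ge> 2" and "finite V" and "card V = v"
    and "\<exists>A. is_OA 1 3 (k + 1) V A"
  shows "\<forall>lam. 0 < lam \<and> lam \<le> v \<longrightarrow>
           (\<exists>A. is_COA lam 2 (2 * k + 1) V A \<and> simple_COA 2 (2 * k + 1) A)"
proof (intro allI impI)
  fix lam assume lam: "0 < lam \<and> lam \<le> v"
  obtain A where OA: "is_OA 1 3 (k + 1) V A" using assms(5) by blast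
  obtain L where L: "L \<subseteq> V" "card L = lam"
    using obtain_subset_with_card_n[of lam V] lam assms(4) by auto
  let ?B = "map (take k) (filter (\<lambda>r. r ! k \<in> L) A)"
  have OA2: "is_OA lam 2 k V ?B"
    using OA_fix_last_column[OF OA assms(3) L(1)] L(2) assms(1) by simp
  have dist: "rows_distinct_on 3 k ?B"
    by (rule rows_distinct_on_map_take_filter[OF rows_distinct_on_OA_index_one[OF OA]]) simp
  have "5 \<le> k" using assms(1) by simp
  then have "\<forall>m<2 * k + 1. column_trail k m < k"
    and "\<forall>m. Suc m < 2 * k + 1 \<longrightarrow> column_trail k m \<noteq> column_trail k (Suc m)"
    and "\<forall>i j. i < j \<and> Suc j < 2 * k + 1 \<longrightarrow> 3 \<le> card (column_trail k ` {i, Suc i, j, Suc j})"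
    using column_trail_less column_trail_Suc_neq card_column_trail_window by auto
  then show "\<exists>A. is_COA lam 2 (2 * k + 1) V A \<and> simple_COA 2 (2 * k + 1) A"
    using COA_of_OA2_trail[OF OA2] simple_COA_of_trail[OF dist] by blast
qed

end
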